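(* Let $q$ be a prime power, $2\le n\le m$, and $\mathcal{C}\subseteq\mathrm{Mat}$ a non-zero rank-metric code of minimum distance $d$. The following are equivalent: (1) $\mathcal{C}$ is MRD; (2) $\rho_{\mathrm c}(\mathcal{C},J)=\dim(J)$ for all subspaces $J\subseteq\mathbb{F}_q^n$ with $\dim(J)\le n-d+1$; (3) $\rho_{\mathrm c}(\mathcal{C},J)=\dim(J)$ for some subspace $J\subseteq\mathbb{F}_q^n$ with $\dim(J)=n-d+1$.
   Context: $\mathrm{Mat}$ is the $\mathbb{F}_q$-space of $n\times m$ matrices over $\mathbb{F}_q$; a rank-metric code is an $\mathbb{F}_q$-linear subspace, with minimum distance $d(\mathcal{C})=\min\{\mathrm{rk}(M)\mid M\in\mathcal{C},M\ne0\}$. A non-zero code with minimum distance $d$ satisfies $\dim\mathcal{C}\le m(n-d+1)$, and is MRD if equality holds. For a subspace $J\subseteq\mathbb{F}_q^n$, $\mathcal{C}(J,\mathrm c)=\{M\in\mathcal{C}\mid\mathrm{colsp}(M)\subseteq J\}$ and $\rho_{\mathrm c}(\mathcal{C},J)=(\dim\mathcal{C}-\dim\mathcal{C}(J^\perp,\mathrm c))/m$, with $J^\perp$ the orthogonal complement for the standard inner product. *)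

theory Defs
  imports "HOL-Analysis.Analysis"
begin

text \<open>Matrices of size n x m over a finite field are modelled as 'a^'m^'n
  (rows indexed by 'n, columns by 'm). Scalar multiplication of matrices:\<close>

definition mscale :: "'a::field \<Rightarrow> 'a^'m^'n \<Rightarrow> 'a^'m^'n" where
  "mscale c M = (\<chi> i j. c * M$i$j)"

interpretation mat: vector_space "mscale :: 'a::field \<Rightarrow> 'a^'m^'n \<Rightarrow> 'a^'m^'n"
  by unfold_locales (auto simp: mscale_def vec_eq_iff algebra_simps)

definition colsp :: "'a::field^'m^'n \<Rightarrow> ('a^'n) set" where
  "colsp M = vec.span (columns M)"

definition min_dist :: "('a::field^'m^'n) set \<Rightarrow> nat" where
  "min_dist C = Min {rank M | M. M \<in> C \<and> M \<noteq> 0}"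

definition orth :: "('a::field^'n) set \<Rightarrow> ('a^'n) set" where
  "orth J = {x. \<forall>y\<in>J. (\<Sum>i\<in>UNIV. x$i * y$i) = 0}"

definition col_subcode :: "('a::field^'m^'n) set \<Rightarrow> ('a^'n) set \<Rightarrow> ('a^'m^'n) set" where
  "col_subcode C J = {M \<in> C. colsp M \<subseteq> J}"

definition rho_c :: "('a::field^'m^'n) set \<Rightarrow> ('a^'n) set \<Rightarrow> real" where
  "rho_c C J = (real (mat.dim C) - real (mat.dim (col_subcode C (orth J)))) / real CARD('m)"

definition is_MRD :: "('a::field^'m^'n) set \<Rightarrow> bool" where
  "is_MRD C \<longleftrightarrow> mat.dim C = CARD('m) * (CARD('n) - min_dist C + 1)"

end

theory Submission
  imports Defs
begin

text \<open>
  Write \<open>cols_in W\<close> for the matrices whose columns lie in \<open>W\<close>, so that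
  \<open>C(J\<^sup>\<perp>, c) = C \<inter> cols_in J\<^sup>\<perp>\<close>; counting points over the finite field gives
  \<open>dim (cols_in W) = m dim W\<close>. Two bounds pin down \<open>dim (C \<inter> cols_in W)\<close>. Every nonzero
  codeword has rank at least \<open>d\<close>, so \<open>C \<inter> cols_in W\<close> meets \<open>cols_in W'\<close> trivially for a
  \<open>(d - 1)\<close>-dimensional \<open>W' \<subseteq> W\<close>; this is the Singleton-type bound
  \<open>dim (C \<inter> cols_in W) \<le> m (dim W - d + 1)\<close>. The dimension formula for the sum
  \<open>C + cols_in W\<close> gives \<open>dim (C \<inter> cols_in W) \<ge> dim C - m (n - dim W)\<close>. For
  \<open>W = J\<^sup>\<perp>\<close>, of dimension \<open>n - dim J\<close>, the two bounds coincide when \<open>C\<close> is MRD and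
  \<open>dim J \<le> n - d + 1\<close>, and the common value says \<open>\<rho> = dim J\<close>. Conversely, if
  \<open>dim J = n - d + 1\<close> then \<open>J\<^sup>\<perp>\<close> has dimension \<open>d - 1\<close>, so
  \<open>C(J\<^sup>\<perp>, c) = 0\<close> and \<open>\<rho> = dim J\<close> reads \<open>dim C = m (n - d + 1)\<close>.
\<close>

section \<open>Rank and orthogonal complements over an arbitrary field\<close>

lemma dim_rows_le_dim_columns_gen:
  fixes M :: "'a::field^'m^'n"
  shows "vec.dim (rows M) \<le> vec.dim (columns M)"
proof -
  obtain W where W: "W \<subseteq> columns M" "vec.independent W" "columns M \<subseteq> vec.span W"
      "card W = vec.dim (columns M)"
    using vec.basis_exists by blast
  have fW: "finite W" using W(2) by (rule vec.finiteI_independent)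
  have "\<forall>j. \<exists>u. column j M = (\<Sum>w\<in>W. u w *s w)"
    using W(3) vec.span_finite[OF fW] unfolding columns_def by blast
  then obtain u where u: "\<And>j. column j M = (\<Sum>w\<in>W. u j w *s w)" by metis
  define r where "r w = (\<chi> j. u j w)" for w
  have "M $ i $ j = (\<Sum>w\<in>W. u j w * w $ i)" for i j
    using arg_cong[OF u, of "\<lambda>v. v $ i"] by (simp add: column_def sum_component)
  then have "row i M = (\<Sum>w\<in>W. (w $ i) *s r w)" for i
    by (simp add: vec_eq_iff sum_component r_def mult.commute row_def)
  moreover have "(\<Sum>w\<in>W. (w $ i) *s r w) \<in> vec.span (r ` W)" for i
    by (intro vec.span_sum vec.span_scale vec.span_base) simp
  ultimately have "rows M \<subseteq> vec.span (r ` W)"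
    unfolding rows_def by auto
  then have "vec.dim (rows M) \<le> card (r ` W)"
    using fW by (intro vec.dim_le_card) auto
  also have "\<dots> \<le> vec.dim (columns M)"
    using W(4) fW card_image_le by metis
  finally show ?thesis .
qed

lemma dim_rows_eq_dim_columns_gen:
  fixes M :: "'a::field^'m^'n"
  shows "vec.dim (rows M) = vec.dim (columns M)"
  using dim_rows_le_dim_columns_gen[of M] dim_rows_le_dim_columns_gen[of "transpose M"] by simp

lemma rank_le_dim_if_columns_subset:
  fixes M :: "'a::field^'m^'n"
  assumes "columns M \<subseteq> V"
  shows "rank M \<le> vec.dim V"
  using vec.dim_subset[OF assms] by (simp add: row_rank_def_gen dim_rows_eq_dim_columns_gen)

lemma rank_le_card_rows_gen: "rank (M :: 'a::field^'m^'n) \<le> CARD('n)"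
  using rank_le_dim_if_columns_subset[of M UNIV] by (simp add: vec_dim_card card_cart_basis)

lemma rank_pos_gen:
  fixes M :: "'a::field^'m^'n"
  assumes "M \<noteq> 0"
  shows "0 < rank M"
proof (rule ccontr)
  assume "\<not> 0 < rank M"
  then have "rows M \<subseteq> {0}" by (simp add: row_rank_def_gen)
  then have "row i M = 0" for i unfolding rows_def by blast
  with assms show False by (simp add: row_def vec_eq_iff)
qed

lemma dim_range_matrix_vector_mult_gen:
  fixes A :: "'a::field^'m^'n"
  shows "vec.dim (range ((*v) A)) = vec.dim (columns A)"
proof (rule antisym)
  show "vec.dim (range ((*v) A)) \<le> vec.dim (columns A)"
    using matrix_vector_mult_in_columnspace_gen by (blast intro: vec.dim_mono)
  have "column j A = A *v axis j 1" for j
    by (simp add: column_def matrix_vector_mult_def axis_def vec_eq_iff if_distrib sum.If_cases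
        cong del: if_weak_cong)
  then show "vec.dim (columns A) \<le> vec.dim (range ((*v) A))"
    unfolding columns_def by (blast intro: vec.dim_subset)
qed

lemma span_Int_span_subset_zero_if_independent:
  assumes "vec.independent (B \<union> C)" and "B \<inter> C = {}"
  shows "vec.span B \<inter> vec.span C \<subseteq> {0 :: 'a::field^'n}"
proof -
  have fin: "finite B" "finite C" and ind: "vec.independent B" "vec.independent C"
    using assms(1) vec.independent_mono vec.finiteI_independent by blast+
  have "vec.dim (vec.span (B \<union> C)) + vec.dim (vec.span B \<inter> vec.span C)
      = vec.dim (vec.span B) + vec.dim (vec.span C)"
    by (simp add: vec.span_Un vec.dim_sums_Int)
  then show ?thesis
    using assms fin ind by (simp add: vec.dim_eq_card_independent card_Un_disjoint)
qed

lemma vec_dim_kernel_add_dim_range: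
  fixes f :: "'a::field^'n \<Rightarrow> 'a^'p"
  assumes lf: "Vector_Spaces.linear (*s) (*s) f"
  shows "vec.dim {x. f x = 0} + vec.dim (range f) = CARD('n)"
proof -
  define K where "K = {x. f x = 0}"
  obtain B where B: "B \<subseteq> K" "vec.independent B" "K \<subseteq> vec.span B" "card B = vec.dim K"
    using vec.basis_exists by blast
  obtain B' where B': "B \<subseteq> B'" "B' \<subseteq> UNIV" "vec.independent B'" "UNIV \<subseteq> vec.span B'"
    by (rule vec.maximal_independent_subset_extend[OF subset_UNIV B(2)])
  define C where "C = B' - B"
  have B'_eq: "B' = B \<union> C" and disj: "B \<inter> C = {}"
    using B'(1) by (auto simp: C_def)
  have "finite B'"
    using B'(3) by (rule vec.finiteI_independent)
  then have fin: "finite B" "finite C"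
    using B'_eq by auto
  have indC: "vec.independent C"
    using B'(3) by (rule vec.independent_mono) (simp add: C_def)
  have "vec.subspace K"
    unfolding K_def by (rule vec.linear_subspace_kernel[OF lf])
  then have span_B: "vec.span B = K"
    using B(1,3) vec.span_minimal by blast
  have "card B' = CARD('n)"
    using vec.basis_card_eq_dim[OF subset_UNIV B'(4,3)] by (simp add: card_cart_basis)
  then have card: "card B + card C = CARD('n)"
    by (simp add: B'_eq disj fin card_Un_disjoint)
  have inj: "inj_on f (vec.span C)"
  proof (rule inj_onI)
    fix x y assume xy: "x \<in> vec.span C" "y \<in> vec.span C" "f x = f y"
    then have "x - y \<in> vec.span B \<inter> vec.span C"
      by (simp add: span_B K_def vec.span_diff vec.linear_diff[OF lf])
    then show "x = y"
      using span_Int_span_subset_zero_if_independent[OF B'(3)[unfolded B'_eq] disj] by auto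
  qed
  have range_eq: "range f = vec.span (f ` C)"
  proof -
    have "range f = f ` vec.span (B \<union> C)"
      using B'(4) by (simp add: B'_eq[symmetric] top.extremum_unique)
    also have "\<dots> = vec.span (f ` B \<union> f ` C)"
      using vec.linear_span_image[OF lf, of "B \<union> C"] by (simp add: image_Un)
    also have "f ` B \<subseteq> {0}"
      using B(1) by (auto simp: K_def)
    then have "vec.span (f ` B \<union> f ` C) \<subseteq> vec.span (insert 0 (f ` C))"
      by (intro vec.span_mono) blast
    then have "vec.span (f ` B \<union> f ` C) = vec.span (f ` C)"
      by (auto intro: vec.span_mono[THEN subsetD])
    finally show ?thesis .
  qed
  have "vec.dim (range f) = vec.dim (f ` C)"
    unfolding range_eq by (rule vec.dim_span)
  also have "\<dots> = card C"
    using vec.dim_image_eq[OF lf inj] vec.dim_eq_card_independent[OF indC] by simp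
  finally show ?thesis
    using B(4) card by (simp add: K_def)
qed

lemma subspace_orth: "vec.subspace (orth J)"
  unfolding vec.subspace_def orth_def
  by (auto simp: distrib_right sum.distrib sum_distrib_left[symmetric] mult.assoc)

lemma orth_span_rows:
  fixes A :: "'a::field^'n^'k"
  shows "orth (vec.span (rows A)) = {x. A *v x = 0}"
proof (intro set_eqI iffI)
  fix x assume "x \<in> orth (vec.span (rows A))"
  then have x: "\<forall>y\<in>vec.span (rows A). (\<Sum>j\<in>UNIV. x $ j * y $ j) = 0"
    unfolding orth_def by simp
  have "row i A \<in> vec.span (rows A)" for i
    by (rule vec.span_base) (auto simp: rows_def)
  with x have "(\<Sum>j\<in>UNIV. x $ j * A $ i $ j) = 0" for i
    by (simp add: row_def)
  then show "x \<in> {x. A *v x = 0}"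
    by (simp add: matrix_vector_mult_def vec_eq_iff mult.commute)
next
  fix x assume "x \<in> {x. A *v x = 0}"
  then have "rows A \<subseteq> {y. (\<Sum>j\<in>UNIV. x $ j * y $ j) = 0}"
    by (auto simp: rows_def row_def matrix_vector_mult_def vec_eq_iff mult.commute)
  moreover have "vec.subspace {y. (\<Sum>j\<in>UNIV. x $ j * y $ j) = 0}"
    unfolding vec.subspace_def
    by (auto simp: distrib_left sum.distrib sum_distrib_left[symmetric] mult.left_commute)
  ultimately have "vec.span (rows A) \<subseteq> {y. (\<Sum>j\<in>UNIV. x $ j * y $ j) = 0}"
    by (rule vec.span_minimal)
  then show "x \<in> orth (vec.span (rows A))"
    unfolding orth_def by blast
qed

lemma obtain_matrix_with_rows:
  fixes B :: "('a::zero^'n) set"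
  assumes "finite B" and "card B \<le> CARD('n)"
  obtains A :: "'a^'n^'n" where "B \<subseteq> rows A" and "rows A \<subseteq> insert 0 B"
proof -
  obtain g :: "'a^'n \<Rightarrow> 'n" where g: "inj_on g B"
    using card_le_inj[OF assms(1) finite[of "UNIV :: 'n set"]] assms(2) by auto
  define A :: "'a^'n^'n" where "A = (\<chi> i. if i \<in> g ` B then the_inv_into B g i else 0)"
  have "row (g b) A = b" if "b \<in> B" for b
    using that g by (simp add: A_def row_def vec_lambda_eta the_inv_into_f_f)
  then have "B \<subseteq> rows A" unfolding rows_def by (auto intro: sym)
  moreover have "rows A \<subseteq> insert 0 B"
    using g by (auto simp: rows_def row_def A_def vec_lambda_eta the_inv_into_into)
  ultimately show ?thesis by (rule that)
qed

text \<open>\<open>orth J\<close> is the kernel of a square matrix whose rows span \<open>J\<close>.\<close>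

lemma dim_orth_add_dim:
  fixes J :: "('a::field^'n) set"
  assumes J: "vec.subspace J"
  shows "vec.dim (orth J) + vec.dim J = CARD('n)"
proof -
  obtain B where B: "B \<subseteq> J" "vec.independent B" "J \<subseteq> vec.span B" "card B = vec.dim J"
    using vec.basis_exists by blast
  have "card B \<le> CARD('n)"
    using vec.independent_card_le_dim[OF subset_UNIV B(2)] by (simp add: card_cart_basis)
  then obtain A :: "'a^'n^'n" where A: "B \<subseteq> rows A" "rows A \<subseteq> insert 0 B"
    using obtain_matrix_with_rows vec.finiteI_independent[OF B(2)] by blast
  have "rows A \<subseteq> J"
    using A(2) B(1) vec.subspace_0[OF J] by blast
  then have "vec.span (rows A) = J"
    using B(3) vec.span_mono[OF A(1)] vec.span_minimal[OF _ J] by blast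
  then have "orth J = {x. A *v x = 0}" and "vec.dim J = vec.dim (range ((*v) A))"
    using orth_span_rows[of A] dim_rows_eq_dim_columns_gen[of A]
      dim_range_matrix_vector_mult_gen[of A] vec.dim_span[of "rows A"]
    by auto
  then show ?thesis
    using vec_dim_kernel_add_dim_range[OF matrix_vector_mul_linear_gen] by simp
qed

section \<open>Counting points of subspaces\<close>

context vector_space
begin

lemma card_span_independent:
  assumes "finite B" and "independent B"
  shows "card (span B) = CARD('a) ^ card B"
proof -
  define g where "g u = (\<Sum>v\<in>B. u v *s v)" for u
  have "span B = g ` (B \<rightarrow>\<^sub>E UNIV)"
  proof
    show "span B \<subseteq> g ` (B \<rightarrow>\<^sub>E UNIV)"
    proof
      fix x assume "x \<in> span B"
      then obtain u where "x = g u"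
        using span_finite[OF assms(1)] by (auto simp: g_def)
      moreover have "g u = g (restrict u B)"
        unfolding g_def by (rule sum.cong) auto
      ultimately show "x \<in> g ` (B \<rightarrow>\<^sub>E UNIV)" by auto
    qed
    show "g ` (B \<rightarrow>\<^sub>E UNIV) \<subseteq> span B"
      using span_finite[OF assms(1)] by (auto simp: g_def)
  qed
  moreover have "inj_on g (B \<rightarrow>\<^sub>E UNIV)"
  proof (rule inj_onI)
    fix u w assume uw: "u \<in> B \<rightarrow>\<^sub>E UNIV" "w \<in> B \<rightarrow>\<^sub>E UNIV" "g u = g w"
    have coeff_0: "\<forall>v\<in>B. c v = 0" if "(\<Sum>v\<in>B. c v *s v) = 0" for c
      using assms that dependent_finite by blast
    have "(\<Sum>v\<in>B. (u v - w v) *s v) = 0"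
      using uw(3) by (simp add: g_def scale_left_diff_distrib sum_subtractf)
    then have "\<forall>v\<in>B. u v - w v = 0"
      by (rule coeff_0)
    then show "u = w"
      using uw(1,2) by (intro extensionalityI[of _ B]) (auto simp: PiE_def)
  qed
  ultimately show ?thesis
    using assms(1) by (simp add: card_image card_PiE)
qed

lemma card_subspace:
  assumes "finite S" and "subspace S"
  shows "card S = CARD('a) ^ dim S"
proof -
  obtain B where B: "B \<subseteq> S" "independent B" "S \<subseteq> span B" "card B = dim S"
    using basis_exists by blast
  then have "span B = S"
    using assms(2) span_minimal by blast
  then show ?thesis
    using card_span_independent[OF finite_subset[OF B(1) assms(1)] B(2)] B(4) by simp
qed

lemma obtain_subspace_with_dim:
  assumes "subspace W" and "k \<le> dim W"
  obtains J where "subspace J" and "J \<subseteq> W" and "dim J = k"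
proof -
  obtain B where B: "B \<subseteq> W" "independent B" "W \<subseteq> span B" "card B = dim W"
    using basis_exists by blast
  obtain T where T: "T \<subseteq> B" "card T = k"
    using obtain_subset_with_card_n assms(2) B(4) by metis
  have "span T \<subseteq> W"
    using T(1) B(1) assms(1) span_minimal by blast
  moreover have "dim (span T) = k"
    using independent_mono[OF B(2) T(1)] T(2) by (simp add: dim_eq_card_independent)
  ultimately show ?thesis
    using that subspace_span by blast
qed

end

section \<open>Matrices with columns in a subspace\<close>

definition cols_in :: "('a::field^'n) set \<Rightarrow> ('a^'m^'n) set" where
  "cols_in V = {M. \<forall>j. column j M \<in> V}"

lemma cols_in_iff_columns_subset: "M \<in> cols_in V \<longleftrightarrow> columns M \<subseteq> V"
  unfolding columns_def cols_in_def by blast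

lemma cols_in_UNIV: "cols_in UNIV = UNIV"
  by (simp add: cols_in_def)

lemma cols_in_mono: "V \<subseteq> W \<Longrightarrow> cols_in V \<subseteq> cols_in W"
  unfolding cols_in_def by blast

lemma subspace_cols_in:
  assumes "vec.subspace V"
  shows "mat.subspace (cols_in V :: ('a::field^'m^'n) set)"
proof -
  have "column j (M + N) = column j M + column j N" "column j (mscale c M) = c *s column j M"
    "column j (0 :: 'a^'m^'n) = 0" for j and M N :: "'a^'m^'n" and c :: 'a
    by (simp_all add: column_def mscale_def vec_eq_iff)
  with assms show ?thesis
    unfolding mat.subspace_def vec.subspace_def cols_in_def by simp
qed

lemma rank_le_dim_if_cols_in: "M \<in> cols_in V \<Longrightarrow> rank M \<le> vec.dim V"
  by (simp add: cols_in_iff_columns_subset rank_le_dim_if_columns_subset)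

lemma col_subcode_eq_Int_cols_in:
  assumes "vec.subspace S"
  shows "col_subcode C S = C \<inter> cols_in S"
proof -
  have "colsp M \<subseteq> S \<longleftrightarrow> columns M \<subseteq> S" for M
    unfolding colsp_def using assms vec.span_minimal vec.span_superset by blast
  then show ?thesis
    unfolding col_subcode_def cols_in_iff_columns_subset Int_def by blast
qed

lemma card_cols_in: "card (cols_in V :: ('a::field^'m^'n) set) = card V ^ CARD('m)"
proof -
  have "bij_betw (\<lambda>M j. column j M) (cols_in V :: ('a^'m^'n) set) (UNIV \<rightarrow>\<^sub>E V)"
    by (rule bij_betw_byWitness[where f' = "\<lambda>f. \<chi> i j. f j $ i"])
      (auto simp: cols_in_def column_def vec_eq_iff)
  then show ?thesis
    by (simp add: bij_betw_same_card card_PiE)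
qed

lemma dim_cols_in:
  fixes V :: "('a::{field,finite}^'n) set"
  assumes "vec.subspace V"
  shows "mat.dim (cols_in V :: ('a^'m^'n) set) = CARD('m) * vec.dim V"
proof -
  have "CARD('a) ^ mat.dim (cols_in V :: ('a^'m^'n) set) = card (cols_in V :: ('a^'m^'n) set)"
    by (rule mat.card_subspace[OF finite subspace_cols_in[OF assms], symmetric])
  also have "\<dots> = CARD('a) ^ (vec.dim V * CARD('m))"
    by (simp add: card_cols_in vec.card_subspace[OF finite assms] power_mult)
  finally have "CARD('a) ^ mat.dim (cols_in V :: ('a^'m^'n) set)
      = CARD('a) ^ (vec.dim V * CARD('m))" .
  moreover have "1 < CARD('a)"
    using card_mono[of UNIV "{0, 1 :: 'a}"] by simp
  ultimately show ?thesis
    by (simp add: mult.commute)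
qed

lemma ex_basis_mat: "\<exists>B :: ('a::field^'m^'n) set. mat.independent B \<and> mat.span B = UNIV"
proof -
  obtain B :: "('a^'m^'n) set"
    where "B \<subseteq> UNIV" "mat.independent B" "UNIV \<subseteq> mat.span B"
      "card B = mat.dim (UNIV :: ('a^'m^'n) set)"
    by (rule mat.basis_exists)
  then show ?thesis
    by auto
qed

text \<open>Any basis will do: every set of matrices over a finite field is finite.\<close>

interpretation mat: finite_dimensional_vector_space
  "mscale :: 'a::{field,finite} \<Rightarrow> 'a^'m^'n \<Rightarrow> 'a^'m^'n"
  "SOME B. mat.independent B \<and> mat.span B = UNIV"
  by unfold_locales (use someI_ex[OF ex_basis_mat] in auto)

lemma dim_UNIV_mat: "mat.dim (UNIV :: ('a::{field,finite}^'m^'n) set) = CARD('m) * CARD('n)"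
  using dim_cols_in[OF vec.subspace_UNIV, where 'm='m]
  by (simp add: cols_in_UNIV vec_dim_card card_cart_basis)

section \<open>Minimum distance and the quantity \<open>\<rho>\<^sub>c\<close>\<close>

lemma finite_ranks: "finite {rank M | M. M \<in> (C :: ('a::field^'m^'n) set) \<and> M \<noteq> 0}"
  by (rule finite_subset[of _ "{..CARD('n)}"]) (auto simp: rank_le_card_rows_gen)

lemma min_dist_le_rank:
  fixes C :: "('a::field^'m^'n) set"
  assumes "M \<in> C" and "M \<noteq> 0"
  shows "min_dist C \<le> rank M"
  unfolding min_dist_def by (rule Min_le[OF finite_ranks]) (use assms in blast)

lemma min_dist_bounds:
  fixes C :: "('a::field^'m^'n) set"
  assumes "M \<in> C" and "M \<noteq> 0"
  shows "0 < min_dist C" and "min_dist C \<le> CARD('n)"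
proof -
  have "min_dist C \<in> {rank M | M. M \<in> C \<and> M \<noteq> 0}"
    unfolding min_dist_def by (rule Min_in[OF finite_ranks]) (use assms in blast)
  then obtain N :: "'a^'m^'n" where "N \<noteq> 0" "rank N = min_dist C"
    by auto
  then show "0 < min_dist C" and "min_dist C \<le> CARD('n)"
    using rank_pos_gen[of N] rank_le_card_rows_gen[of N] by simp_all
qed

lemma singleton_bound_cols_in:
  fixes D :: "('a::{field,finite}^'m^'n) set"
  assumes D: "mat.subspace D" "D \<subseteq> cols_in W" and W: "vec.subspace W"
    and rank_D: "\<And>M. M \<in> D \<Longrightarrow> M \<noteq> 0 \<Longrightarrow> d \<le> rank M"
    and d: "d \<le> vec.dim W + 1"
  shows "mat.dim D + CARD('m) * (d - 1) \<le> CARD('m) * vec.dim W"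
proof -
  obtain W' where W': "vec.subspace W'" "W' \<subseteq> W" "vec.dim W' = d - 1"
    using vec.obtain_subspace_with_dim[OF W] d by (metis diff_le_mono add_diff_cancel_right')
  have "D \<inter> cols_in W' \<subseteq> {0}"
  proof
    fix M assume M: "M \<in> D \<inter> cols_in W'"
    show "M \<in> {0}"
    proof (rule ccontr)
      assume "M \<notin> {0}"
      then have "d \<le> rank M" and "0 < rank M"
        using M rank_D rank_pos_gen by auto
      moreover have "rank M \<le> d - 1"
        using M rank_le_dim_if_cols_in W'(3) by fastforce
      ultimately show False by linarith
    qed
  qed
  then have "mat.dim (D \<inter> cols_in W') = 0"
    by simp
  then have "mat.dim {x + y |x y. x \<in> D \<and> y \<in> cols_in W'} = mat.dim D + CARD('m) * (d - 1)"
    using mat.dim_sums_Int[OF D(1) subspace_cols_in[OF W'(1)]]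
      dim_cols_in[OF W'(1), where 'm='m, unfolded W'(3)]
    by linarith
  moreover have "{x + y |x y. x \<in> D \<and> y \<in> cols_in W'} \<subseteq> cols_in W"
    using D(2) cols_in_mono[OF W'(2)] mat.subspace_add[OF subspace_cols_in[OF W]] by blast
  then have "mat.dim {x + y |x y. x \<in> D \<and> y \<in> cols_in W'}
      \<le> mat.dim (cols_in W :: ('a^'m^'n) set)"
    by (rule mat.dim_subset)
  ultimately show ?thesis
    using dim_cols_in[OF W, where 'm='m] by linarith
qed

lemma dim_add_le_dim_Int_cols_in:
  fixes C :: "('a::{field,finite}^'m^'n) set"
  assumes C: "mat.subspace C" and W: "vec.subspace W"
  shows "mat.dim C + CARD('m) * vec.dim W
    \<le> mat.dim (C \<inter> cols_in W) + CARD('m) * CARD('n)"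
proof -
  have "mat.dim {x + y |x y. x \<in> C \<and> y \<in> cols_in W} \<le> mat.dim (UNIV :: ('a^'m^'n) set)"
    by (rule mat.dim_subset) simp
  then show ?thesis
    using mat.dim_sums_Int[OF C subspace_cols_in[OF W]] dim_cols_in[OF W, where 'm='m]
      dim_UNIV_mat[where 'a='a and 'm='m and 'n='n]
    by linarith
qed

lemma rho_c_eq_dim_iff:
  fixes C :: "('a::field^'m^'n) set"
  shows "rho_c C J = real (vec.dim J)
    \<longleftrightarrow> mat.dim (col_subcode C (orth J)) + CARD('m) * vec.dim J = mat.dim C"
proof -
  have "rho_c C J = real (vec.dim J)
      \<longleftrightarrow> real (mat.dim C) - real (mat.dim (col_subcode C (orth J)))
        = real (CARD('m) * vec.dim J)"
    unfolding rho_c_def by (simp add: divide_eq_eq mult.commute)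
  then show ?thesis
    by linarith
qed

lemma rho_c_eq_dim_if_MRD:
  fixes C :: "('a::{field,finite}^'m^'n) set"
  assumes C: "mat.subspace C" "is_MRD C" "C \<noteq> {0}"
    and J: "vec.subspace J" "vec.dim J \<le> CARD('n) - min_dist C + 1"
  shows "rho_c C J = real (vec.dim J)"
proof -
  define d where "d = min_dist C"
  define D where "D = C \<inter> cols_in (orth J)"
  obtain M where M: "M \<in> C" "M \<noteq> 0"
    using C(1,3) mat.subspace_0 by blast
  have d: "0 < d" "d \<le> CARD('n)"
    using min_dist_bounds[OF M] unfolding d_def by auto
  have orth: "vec.dim (orth J) + vec.dim J = CARD('n)"
    by (rule dim_orth_add_dim[OF J(1)])
  have "mat.dim D + CARD('m) * (d - 1) \<le> CARD('m) * vec.dim (orth J)"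
  proof (rule singleton_bound_cols_in[OF _ _ subspace_orth])
    show "mat.subspace D"
      unfolding D_def by (rule mat.subspace_inter[OF C(1) subspace_cols_in[OF subspace_orth]])
    show "\<And>M. M \<in> D \<Longrightarrow> M \<noteq> 0 \<Longrightarrow> d \<le> rank M"
      using min_dist_le_rank unfolding D_def d_def by blast
    show "d \<le> vec.dim (orth J) + 1"
      using orth J(2) d unfolding d_def by linarith
  qed (simp add: D_def)
  moreover have "mat.dim C + CARD('m) * vec.dim (orth J) \<le> mat.dim D + CARD('m) * CARD('n)"
    unfolding D_def by (rule dim_add_le_dim_Int_cols_in[OF C(1) subspace_orth])
  moreover have "mat.dim C = CARD('m) * (CARD('n) - d + 1)"
    using C(2) unfolding is_MRD_def d_def .
  moreover have "(CARD('n) - d + 1) + (d - 1) = CARD('n)"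
    using d by simp
  then have "CARD('m) * (CARD('n) - d + 1) + CARD('m) * (d - 1) = CARD('m) * CARD('n)"
    by (metis distrib_left)
  moreover have "CARD('m) * vec.dim (orth J) + CARD('m) * vec.dim J = CARD('m) * CARD('n)"
    using orth by (metis distrib_left)
  ultimately show ?thesis
    unfolding rho_c_eq_dim_iff col_subcode_eq_Int_cols_in[OF subspace_orth] D_def[symmetric]
    by linarith
qed

lemma col_subcode_orth_trivial:
  fixes C :: "('a::field^'m^'n) set"
  assumes "vec.subspace J" and "vec.dim J = CARD('n) - min_dist C + 1"
  shows "col_subcode C (orth J) \<subseteq> {0}"
proof
  fix M assume M: "M \<in> col_subcode C (orth J)"
  show "M \<in> {0}"
  proof (rule ccontr)
    assume "M \<notin> {0}"
    then have "min_dist C \<le> rank M"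
      using M min_dist_le_rank by (auto simp: col_subcode_def)
    moreover have "rank M \<le> vec.dim (orth J)"
      using M col_subcode_eq_Int_cols_in[OF subspace_orth] rank_le_dim_if_cols_in by blast
    ultimately show False
      using dim_orth_add_dim[OF assms(1)] assms(2) by linarith
  qed
qed

lemma is_MRD_if_rho_c_eq_dim:
  fixes C :: "('a::{field,finite}^'m^'n) set"
  assumes "vec.subspace J" and "vec.dim J = CARD('n) - min_dist C + 1"
    and "rho_c C J = real (vec.dim J)"
  shows "is_MRD C"
proof -
  have "mat.dim (col_subcode C (orth J)) = 0"
    using col_subcode_orth_trivial[OF assms(1,2)] by simp
  then show ?thesis
    using assms(2,3) unfolding rho_c_eq_dim_iff is_MRD_def by (simp del: mat.dim_eq_0)
qed

theorem theorem5p4: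
  fixes C :: "('a::{field,finite}^'m^'n) set" and d :: nat
  assumes "2 \<le> CARD('n)" and "CARD('n) \<le> CARD('m)"
    and "mat.subspace C" and "C \<noteq> {0}"
    and "d = min_dist C"
  shows "(is_MRD C \<longleftrightarrow>
          (\<forall>J. vec.subspace J \<and> vec.dim J \<le> CARD('n) - d + 1 \<longrightarrow> rho_c C J = real (vec.dim J)))
       \<and> (is_MRD C \<longleftrightarrow>
          (\<exists>J. vec.subspace J \<and> vec.dim J = CARD('n) - d + 1 \<and> rho_c C J = real (vec.dim J)))"
proof -
  obtain M where M: "M \<in> C" "M \<noteq> 0"
    using assms(3,4) mat.subspace_0 by blast
  have "CARD('n) - d + 1 \<le> vec.dim (UNIV :: ('a^'n) set)"
    using min_dist_bounds[OF M] assms(5) unfolding vec_dim_card by auto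
  then obtain J0 :: "('a^'n) set"
    where J0: "vec.subspace J0" "J0 \<subseteq> UNIV" "vec.dim J0 = CARD('n) - d + 1"
    by (rule vec.obtain_subspace_with_dim[OF vec.subspace_UNIV])
  note MRD_rho = rho_c_eq_dim_if_MRD[OF assms(3) _ assms(4), folded assms(5)]
  note rho_MRD = is_MRD_if_rho_c_eq_dim[where C = C, folded assms(5)]
  show ?thesis
  proof (intro conjI iffI)
    show "\<forall>J. vec.subspace J \<and> vec.dim J \<le> CARD('n) - d + 1 \<longrightarrow> rho_c C J = real (vec.dim J)"
      if "is_MRD C"
      using MRD_rho[OF that] by blast
    show "\<exists>J. vec.subspace J \<and> vec.dim J = CARD('n) - d + 1 \<and> rho_c C J = real (vec.dim J)"
      if "is_MRD C"
      using MRD_rho[OF that J0(1)] J0 by auto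
    show "is_MRD C"
      if "\<forall>J. vec.subspace J \<and> vec.dim J \<le> CARD('n) - d + 1 \<longrightarrow> rho_c C J = real (vec.dim J)"
      using that J0 rho_MRD by simp
    show "is_MRD C"
      if "\<exists>J. vec.subspace J \<and> vec.dim J = CARD('n) - d + 1 \<and> rho_c C J = real (vec.dim J)"
      using that rho_MRD by blast
  qed
qed

end
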